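(* Let $f_1,\dots,f_n:\mathbb{R}^d\to\mathbb{R}$ satisfy Assumption A1 and let $F=(f_1,\dots,f_n)$. Then $R\le\sqrt{\kappa}\,r$, where $R:=\mathrm{diam}(\mathrm{Pareto}(F))=\sup\{\|x-x'\|_2:x,x'\in\mathrm{Pareto}(F)\}$.
   Context: Assumption A1: each $f_i$ is twice differentiable with $\mu\mathbf{I}\preceq\nabla^2 f_i(x)\preceq L\mathbf{I}$ for all $x$, $0<\mu\le L$; $\kappa:=L/\mu$; and $r:=\max_{i,j\in[n]}\|\operatorname{argmin} f_i-\operatorname{argmin} f_j\|_2$. A point $x$ is Pareto optimal if for all $x'$, $f_i(x')<f_i(x)$ for some $i$ implies $f_j(x')>f_j(x)$ for some $j$; $\mathrm{Pareto}(F)$ is the set of Pareto optimal points. *)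

theory Defs
  imports "HOL-Analysis.Analysis"
begin

text \<open>Twice differentiable with Hessian bounds  mu I <= Hess f(x) <= L I  (Loewner order),
  written out: f has gradient g(x), g has derivative H(x) (the Hessian as a linear map),
  and mu |h|^2 <= h . H(x) h <= L |h|^2 for all h.\<close>
definition hess_bounded :: "real \<Rightarrow> real \<Rightarrow> ('a::euclidean_space \<Rightarrow> real) \<Rightarrow> bool" where
  "hess_bounded mu L f \<longleftrightarrow>
     (\<exists>g H. (\<forall>x. (f has_derivative (\<lambda>h. g x \<bullet> h)) (at x)) \<and>
            (\<forall>x. (g has_derivative H x) (at x)) \<and>
            (\<forall>x h. mu * (norm h)\<^sup>2 \<le> h \<bullet> H x h \<and> h \<bullet> H x h \<le> L * (norm h)\<^sup>2))"

text \<open>The (unique, under strong convexity) minimizer of f.\<close>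
definition argmin_pt :: "('a \<Rightarrow> real) \<Rightarrow> 'a" where
  "argmin_pt f = (THE x. \<forall>y. f x \<le> f y)"

definition pareto :: "nat \<Rightarrow> (nat \<Rightarrow> 'a \<Rightarrow> real) \<Rightarrow> 'a set" where
  "pareto n f = {x. \<forall>x'. (\<exists>i<n. f i x' < f i x) \<longrightarrow> (\<exists>j<n. f j x' > f j x)}"

definition minimizer_spread :: "nat \<Rightarrow> (nat \<Rightarrow> 'a::euclidean_space \<Rightarrow> real) \<Rightarrow> real" where
  "minimizer_spread n f = Max {norm (argmin_pt (f i) - argmin_pt (f j)) | i j. i < n \<and> j < n}"

end

theory Submission
  imports Defs
begin

text \<open>Each \<open>f\<^sub>i\<close> lies between the quadratics
  \<open>f\<^sub>i x + \<nabla>f\<^sub>i x \<bullet> (y - x) + c/2 \<parallel>y - x\<parallel>\<^sup>2\<close> with \<open>c = mu\<close> and \<open>c = L\<close>.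
  At a Pareto point \<open>x\<close> there is no common descent direction, so by separation
  \<open>0 = \<Sum> w\<^sub>i \<nabla>f\<^sub>i x\<close> for some convex weights \<open>w\<close>. Comparing the quadratic bounds at the
  weighted mean \<open>m = \<Sum> w\<^sub>i a\<^sub>i\<close> of the minimizers \<open>a\<^sub>i\<close> and summing with the weights
  \<open>w\<^sub>i\<close> cancels the gradients and gives \<open>2 mu \<parallel>x - m\<parallel>\<^sup>2 \<le> (L - mu) Var\<^sub>w a\<close>.
  For two Pareto points with means \<open>m, m'\<close>, the double average of \<open>\<parallel>a\<^sub>i - a\<^sub>j\<parallel>\<^sup>2 \<le> r\<^sup>2\<close> equals
  \<open>\<parallel>m - m'\<parallel>\<^sup>2 + Var\<^sub>w a + Var\<^sub>w' a\<close>, and a weighted Cauchy-Schwarz inequality bounds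
  \<open>\<parallel>x - m\<parallel> + \<parallel>m - m'\<parallel> + \<parallel>m' - x'\<parallel>\<close> by \<open>sqrt (L / mu) r\<close>.\<close>

definition strongly_convex_grad :: "real \<Rightarrow> ('a::real_inner \<Rightarrow> 'a) \<Rightarrow> ('a \<Rightarrow> real) \<Rightarrow> bool" where
  "strongly_convex_grad mu g f \<longleftrightarrow>
     (\<forall>x y. f x + g x \<bullet> (y - x) + mu / 2 * (norm (y - x))\<^sup>2 \<le> f y)"

definition smooth_grad :: "real \<Rightarrow> ('a::real_inner \<Rightarrow> 'a) \<Rightarrow> ('a \<Rightarrow> real) \<Rightarrow> bool" where
  "smooth_grad L g f \<longleftrightarrow>
     (\<forall>x y. f y \<le> f x + g x \<bullet> (y - x) + L / 2 * (norm (y - x))\<^sup>2)"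

lemma DERIV2_lower_bound:
  fixes p p' p'' :: "real \<Rightarrow> real"
  assumes p': "\<And>t. (p has_real_derivative p' t) (at t)"
    and p'': "\<And>t. (p' has_real_derivative p'' t) (at t)"
    and bound: "\<And>t. c \<le> p'' t"
  shows "p 0 + p' 0 + c / 2 \<le> p 1"
proof -
  have p'_lower: "p' 0 + c * t \<le> p' t" if "0 \<le> t" for t
  proof -
    have "(\<lambda>s. p' s - c * s) 0 \<le> (\<lambda>s. p' s - c * s) t"
    proof (rule DERIV_nonneg_imp_nondecreasing[OF that])
      fix s show "\<exists>y. ((\<lambda>s. p' s - c * s) has_real_derivative y) (at s) \<and> 0 \<le> y"
        using bound[of s] by (intro exI[of _ "p'' s - c"]) (auto intro!: derivative_eq_intros p'')
    qed
    then show ?thesis by simp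
  qed
  have "(\<lambda>s. p s - p' 0 * s - c / 2 * s\<^sup>2) 0 \<le> (\<lambda>s. p s - p' 0 * s - c / 2 * s\<^sup>2) 1"
  proof (rule DERIV_nonneg_imp_nondecreasing[of 0 1])
    fix s :: real assume "0 \<le> s" "s \<le> 1"
    then show "\<exists>y. ((\<lambda>s. p s - p' 0 * s - c / 2 * s\<^sup>2) has_real_derivative y) (at s) \<and> 0 \<le> y"
      using p'_lower[of s]
      by (intro exI[of _ "p' s - p' 0 - c * s"]) (auto intro!: derivative_eq_intros p')
  qed simp
  then show ?thesis by simp
qed

lemma hessian_lower_bound_imp_quadratic_minorant:
  fixes f :: "'a::real_inner \<Rightarrow> real"
  assumes f': "\<And>x. (f has_derivative (\<lambda>h. g x \<bullet> h)) (at x)"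
    and g': "\<And>x. (g has_derivative H x) (at x)"
    and H: "\<And>x h. c * (norm h)\<^sup>2 \<le> h \<bullet> H x h"
  shows "f x + g x \<bullet> (y - x) + c / 2 * (norm (y - x))\<^sup>2 \<le> f y"
proof -
  define h where "h = y - x"
  define \<gamma> where "\<gamma> t = x + t *\<^sub>R h" for t :: real
  have \<gamma>': "(\<gamma> has_derivative (\<lambda>s. s *\<^sub>R h)) (at t)" for t
    unfolding \<gamma>_def by (auto intro!: derivative_eq_intros)
  have D1: "((\<lambda>t. f (\<gamma> t)) has_real_derivative g (\<gamma> t) \<bullet> h) (at t)" for t
  proof -
    have "((\<lambda>t. f (\<gamma> t)) has_derivative (\<lambda>s. g (\<gamma> t) \<bullet> (s *\<^sub>R h))) (at t)"
      by (rule has_derivative_compose[OF \<gamma>' f'])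
    moreover have "(\<lambda>s. g (\<gamma> t) \<bullet> (s *\<^sub>R h)) = (*) (g (\<gamma> t) \<bullet> h)"
      by (auto simp: mult.commute)
    ultimately show ?thesis by (simp add: has_field_derivative_def)
  qed
  have D2: "((\<lambda>t. g (\<gamma> t) \<bullet> h) has_real_derivative h \<bullet> H (\<gamma> t) h) (at t)" for t
  proof -
    have "((\<lambda>t. g (\<gamma> t)) has_derivative (\<lambda>s. H (\<gamma> t) (s *\<^sub>R h))) (at t)"
      by (rule has_derivative_compose[OF \<gamma>' g'])
    then have "((\<lambda>t. g (\<gamma> t) \<bullet> h) has_derivative (\<lambda>s. H (\<gamma> t) (s *\<^sub>R h) \<bullet> h)) (at t)"
      by (rule has_derivative_inner_left)
    moreover have "(\<lambda>s. H (\<gamma> t) (s *\<^sub>R h) \<bullet> h) = (*) (h \<bullet> H (\<gamma> t) h)"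
      using linear_cmul[OF has_derivative_linear[OF g']] by (auto simp: inner_commute mult.commute)
    ultimately show ?thesis by (simp add: has_field_derivative_def)
  qed
  have "f (\<gamma> 0) + g (\<gamma> 0) \<bullet> h + c * (norm h)\<^sup>2 / 2 \<le> f (\<gamma> 1)"
    by (rule DERIV2_lower_bound[OF D1 D2 H])
  then show ?thesis by (simp add: \<gamma>_def h_def)
qed

lemma hess_bounded_imp_quadratic_bounds:
  fixes f :: "'a::euclidean_space \<Rightarrow> real"
  assumes "hess_bounded mu L f"
  obtains g where "\<And>x. (f has_derivative (\<lambda>h. g x \<bullet> h)) (at x)"
    and "strongly_convex_grad mu g f" and "smooth_grad L g f"
proof -
  obtain g H where f': "\<And>x. (f has_derivative (\<lambda>h. g x \<bullet> h)) (at x)"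
    and g': "\<And>x. (g has_derivative H x) (at x)"
    and H: "\<And>x h. mu * (norm h)\<^sup>2 \<le> h \<bullet> H x h \<and> h \<bullet> H x h \<le> L * (norm h)\<^sup>2"
    using assms unfolding hess_bounded_def by blast
  have "strongly_convex_grad mu g f"
    unfolding strongly_convex_grad_def
    using hessian_lower_bound_imp_quadratic_minorant[OF f' g'] H by blast
  moreover have "- f x + - g x \<bullet> (y - x) + - L / 2 * (norm (y - x))\<^sup>2 \<le> - f y" for x y
  proof (rule hessian_lower_bound_imp_quadratic_minorant[where H = "\<lambda>x h. - H x h"])
    show "((\<lambda>x. - f x) has_derivative (\<lambda>h. - g x \<bullet> h)) (at x)" for x
      using has_derivative_minus[OF f'] by simp
    show "((\<lambda>x. - g x) has_derivative (\<lambda>h. - H x h)) (at x)" for x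
      using has_derivative_minus[OF g'] by simp
    show "- L * (norm h)\<^sup>2 \<le> h \<bullet> - H x h" for x h
      using H by simp
  qed
  then have "smooth_grad L g f"
    unfolding smooth_grad_def by (simp add: algebra_simps)
  ultimately show ?thesis using that f' by blast
qed

lemma strongly_convex_attains_min:
  fixes f :: "'a::euclidean_space \<Rightarrow> real"
  assumes cont: "continuous_on UNIV f" and sc: "strongly_convex_grad mu g f" and mu: "0 < mu"
  obtains a where "\<And>y. f a \<le> f y"
proof -
  define R where "R = 2 * norm (g 0) / mu"
  have "R \<ge> 0" using mu by (simp add: R_def)
  have "cball 0 R \<noteq> {}" using \<open>R \<ge> 0\<close> by auto
  then obtain a where a_min: "\<And>y. y \<in> cball 0 R \<Longrightarrow> f a \<le> f y"
    using continuous_attains_inf[OF compact_cball _ continuous_on_subset[OF cont]] by blast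
  have "f a \<le> f y" for y
  proof (cases "y \<in> cball 0 R")
    case False
    then have "norm (g 0) \<le> mu / 2 * norm y"
      using mu by (simp add: R_def field_simps)
    then have "norm (g 0) * norm y \<le> mu / 2 * (norm y)\<^sup>2"
      using mult_right_mono[OF _ norm_ge_zero, of "norm (g 0)" "mu / 2 * norm y" y]
      by (simp add: power2_eq_square mult.assoc)
    moreover have "- (norm (g 0) * norm y) \<le> g 0 \<bullet> y"
      using Cauchy_Schwarz_ineq2[of "g 0" y] by linarith
    moreover have "f 0 + g 0 \<bullet> y + mu / 2 * (norm y)\<^sup>2 \<le> f y"
      using sc unfolding strongly_convex_grad_def by (metis diff_zero)
    moreover have "f a \<le> f 0" using a_min \<open>R \<ge> 0\<close> by simp
    ultimately show ?thesis by linarith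
  qed (use a_min in blast)
  then show ?thesis by (rule that)
qed

lemma grad_zero_at_min:
  assumes "(f has_derivative (\<lambda>h. g \<bullet> h)) (at x)" and "\<And>y. f x \<le> f y"
  shows "g = 0"
proof -
  have "(\<lambda>h. g \<bullet> h) = (\<lambda>h. 0)"
    using differential_zero_maxmin[of x UNIV] assms by blast
  then have "g \<bullet> g = 0" by meson
  then show ?thesis by simp
qed

lemma grad_argmin_pt_eq_0:
  fixes f :: "'a::euclidean_space \<Rightarrow> real"
  assumes f': "\<And>x. (f has_derivative (\<lambda>h. g x \<bullet> h)) (at x)"
    and sc: "strongly_convex_grad mu g f" and mu: "0 < mu"
  shows "g (argmin_pt f) = 0"
proof -
  have "continuous_on UNIV f"
    using f' has_derivative_continuous continuous_at_imp_continuous_on by blast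
  then obtain a where a_min: "\<And>y. f a \<le> f y"
    using strongly_convex_attains_min sc mu by blast
  have ga: "g a = 0"
    using grad_zero_at_min[OF f' a_min] .
  have "argmin_pt f = a"
    unfolding argmin_pt_def
  proof (rule the_equality)
    fix b assume b_min: "\<forall>y. f b \<le> f y"
    have "f a + mu / 2 * (norm (b - a))\<^sup>2 \<le> f b"
      using sc ga unfolding strongly_convex_grad_def by (metis inner_zero_left add_0_right)
    moreover have "f b \<le> f a" using b_min by blast
    ultimately have "mu * (norm (b - a))\<^sup>2 \<le> 0"
      by linarith
    then have "(norm (b - a))\<^sup>2 \<le> 0"
      using mu by (simp add: mult_le_0_iff)
    then show "b = a" by simp
  qed (use a_min in blast)
  with ga show ?thesis by simp
qed

definition convex_weights :: "'i set \<Rightarrow> ('i \<Rightarrow> real) \<Rightarrow> bool" where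
  "convex_weights I w \<longleftrightarrow> (\<forall>i\<in>I. 0 \<le> w i) \<and> sum w I = 1"

definition wmean :: "'i set \<Rightarrow> ('i \<Rightarrow> real) \<Rightarrow> ('i \<Rightarrow> 'a::real_vector) \<Rightarrow> 'a" where
  "wmean I w a = (\<Sum>i\<in>I. w i *\<^sub>R a i)"

definition wvar :: "'i set \<Rightarrow> ('i \<Rightarrow> real) \<Rightarrow> ('i \<Rightarrow> 'a::real_inner) \<Rightarrow> real" where
  "wvar I w a = (\<Sum>i\<in>I. w i * (norm (wmean I w a - a i))\<^sup>2)"

lemma wvar_nonneg: "convex_weights I w \<Longrightarrow> 0 \<le> wvar I w a"
  unfolding convex_weights_def wvar_def by (intro sum_nonneg) auto

lemma convex_weights_sum_le:
  assumes "convex_weights I w" and "\<And>i. i \<in> I \<Longrightarrow> h i \<le> B"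
  shows "(\<Sum>i\<in>I. w i * h i) \<le> B"
proof -
  have "(\<Sum>i\<in>I. w i * h i) \<le> (\<Sum>i\<in>I. w i * B)"
    using assms unfolding convex_weights_def by (intro sum_mono mult_left_mono) auto
  also have "\<dots> = B"
    using assms(1) unfolding convex_weights_def by (simp add: sum_distrib_right[symmetric])
  finally show ?thesis .
qed

lemma sum_sq_dist_eq_wvar:
  fixes a :: "'i \<Rightarrow> 'a::real_inner"
  assumes w: "sum w I = 1"
  shows "(\<Sum>i\<in>I. w i * (norm (x - a i))\<^sup>2) = (norm (x - wmean I w a))\<^sup>2 + wvar I w a"
proof -
  define m where "m = wmean I w a"
  have centred: "(\<Sum>i\<in>I. w i *\<^sub>R (m - a i)) = 0"
    using w by (simp add: m_def wmean_def scaleR_diff_right sum_subtractf scaleR_sum_left[symmetric])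
  have split: "(norm (x - a i))\<^sup>2 = (norm (x - m))\<^sup>2 + 2 * ((x - m) \<bullet> (m - a i)) + (norm (m - a i))\<^sup>2"
    for i
    using dot_norm[of "x - m" "m - a i"] by simp
  have "(\<Sum>i\<in>I. w i * (norm (x - a i))\<^sup>2)
      = (\<Sum>i\<in>I. w i * (norm (x - m))\<^sup>2 + 2 * (w i * ((x - m) \<bullet> (m - a i))) + w i * (norm (m - a i))\<^sup>2)"
    by (simp only: split distrib_left mult.left_commute[of _ 2])
  also have "\<dots> = (\<Sum>i\<in>I. w i) * (norm (x - m))\<^sup>2 + 2 * (\<Sum>i\<in>I. w i * ((x - m) \<bullet> (m - a i)))
      + wvar I w a"
    by (simp only: sum.distrib sum_distrib_left[symmetric] sum_distrib_right[symmetric] wvar_def m_def)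
  also have "(\<Sum>i\<in>I. w i * ((x - m) \<bullet> (m - a i))) = (x - m) \<bullet> (\<Sum>i\<in>I. w i *\<^sub>R (m - a i))"
    by (simp add: inner_sum_right)
  finally show ?thesis
    using w centred by (simp add: m_def)
qed

lemma wmean_cross_sq_dist:
  fixes a :: "'i \<Rightarrow> 'a::real_inner"
  assumes w: "sum w I = 1" and v: "sum v I = 1"
  shows "(\<Sum>j\<in>I. v j * (\<Sum>i\<in>I. w i * (norm (a j - a i))\<^sup>2))
    = (norm (wmean I w a - wmean I v a))\<^sup>2 + wvar I w a + wvar I v a"
proof -
  have "(\<Sum>j\<in>I. v j * (\<Sum>i\<in>I. w i * (norm (a j - a i))\<^sup>2))
      = (\<Sum>j\<in>I. v j * (norm (wmean I w a - a j))\<^sup>2) + wvar I w a"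
    using v by (simp add: sum_sq_dist_eq_wvar[OF w] norm_minus_commute distrib_left sum.distrib
        sum_distrib_right[symmetric])
  then show ?thesis
    by (simp add: sum_sq_dist_eq_wvar[OF v])
qed

lemma smooth_common_descent:
  fixes f :: "'i \<Rightarrow> 'a::euclidean_space \<Rightarrow> real"
  assumes I: "finite I" and smooth: "\<And>i. i \<in> I \<Longrightarrow> smooth_grad L (g i) (f i)" and L: "0 < L"
    and not_stationary: "0 \<notin> convex hull ((\<lambda>i. g i x) ` I)"
  obtains z where "\<And>i. i \<in> I \<Longrightarrow> f i z < f i x"
proof -
  have "closed (convex hull ((\<lambda>i. g i x) ` I))"
    using I by (intro compact_imp_closed finite_imp_compact_convex_hull) auto
  then obtain u b where u: "u \<noteq> 0" and b: "0 < b"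
    and sep: "\<And>v. v \<in> convex hull ((\<lambda>i. g i x) ` I) \<Longrightarrow> b < u \<bullet> v"
    using separating_hyperplane_closed_0[OF convex_convex_hull _ not_stationary] by blast
  \<comment> \<open>minimizes \<open>- t b + L/2 t\<^sup>2 \<parallel>u\<parallel>\<^sup>2\<close>\<close>
  define t where "t = b / (L * (norm u)\<^sup>2)"
  have nu: "0 < (norm u)\<^sup>2" using u by simp
  have t: "0 < t" using b L nu by (simp add: t_def)
  have "f i (x - t *\<^sub>R u) < f i x" if i: "i \<in> I" for i
  proof -
    have "b < u \<bullet> g i x"
      using sep[OF hull_inc] i by blast
    have "f i (x - t *\<^sub>R u)
        \<le> f i x + g i x \<bullet> ((x - t *\<^sub>R u) - x) + L / 2 * (norm ((x - t *\<^sub>R u) - x))\<^sup>2"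
      using smooth[OF i] unfolding smooth_grad_def by blast
    also have "\<dots> = f i x - t * (u \<bullet> g i x) + L / 2 * t\<^sup>2 * (norm u)\<^sup>2"
      using t by (simp add: inner_commute power_mult_distrib)
    also have "\<dots> < f i x - t * b + L / 2 * t\<^sup>2 * (norm u)\<^sup>2"
      using \<open>b < u \<bullet> g i x\<close> t by simp
    also have "\<dots> = f i x - b\<^sup>2 / (2 * L * (norm u)\<^sup>2)"
      using L nu by (simp add: t_def field_simps power2_eq_square)
    also have "\<dots> < f i x" using L nu b by simp
    finally show ?thesis .
  qed
  then show ?thesis by (rule that)
qed

lemma pareto_imp_stationary:
  fixes f :: "nat \<Rightarrow> 'a::euclidean_space \<Rightarrow> real"
  assumes smooth: "\<And>i. i < n \<Longrightarrow> smooth_grad L (g i) (f i)" and L: "0 < L"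
    and n: "n \<ge> 1" and x: "x \<in> pareto n f"
  obtains w where "convex_weights {..<n} w" and "wmean {..<n} w (\<lambda>i. g i x) = 0"
proof -
  have "0 \<in> convex hull ((\<lambda>i. g i x) ` {..<n})"
  proof (rule ccontr)
    assume "0 \<notin> convex hull ((\<lambda>i. g i x) ` {..<n})"
    moreover have "\<And>i. i \<in> {..<n} \<Longrightarrow> smooth_grad L (g i) (f i)" using smooth by simp
    ultimately obtain z where descent: "\<And>i. i \<in> {..<n} \<Longrightarrow> f i z < f i x"
      using smooth_common_descent[OF finite_lessThan _ L] by blast
    then have "\<exists>i<n. f i z < f i x" using n by (intro exI[of _ 0]) simp
    then obtain j where "j < n" and "f j x < f j z"
      using x unfolding pareto_def by blast
    with descent[of j] show False by simp
  qed
  moreover have "(\<lambda>i. g i x) ` {..<n} = \<Union>((\<lambda>i. {g i x}) ` {..<n})" by blast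
  ultimately have "0 \<in> {\<Sum>i<n. c i *\<^sub>R s i | c s.
      (\<forall>i\<in>{..<n}. 0 \<le> c i) \<and> sum c {..<n} = 1 \<and> (\<forall>i\<in>{..<n}. s i \<in> {g i x})}"
    using convex_hull_finite_union[of "{..<n}" "\<lambda>i. {g i x}"] by simp
  then obtain w s where w: "convex_weights {..<n} w" and s: "\<forall>i\<in>{..<n}. s i \<in> {g i x}"
    and "0 = (\<Sum>i<n. w i *\<^sub>R s i)"
    unfolding convex_weights_def by blast
  moreover have "(\<Sum>i<n. w i *\<^sub>R s i) = wmean {..<n} w (\<lambda>i. g i x)"
    unfolding wmean_def using s by (intro sum.cong) auto
  ultimately show ?thesis using that by simp
qed

lemma stationary_point_near_wmean_of_minimizers:
  fixes f :: "'i \<Rightarrow> 'a::real_inner \<Rightarrow> real"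
  assumes sc: "\<And>i. i \<in> I \<Longrightarrow> strongly_convex_grad mu (g i) (f i)"
    and smooth: "\<And>i. i \<in> I \<Longrightarrow> smooth_grad L (g i) (f i)"
    and crit: "\<And>i. i \<in> I \<Longrightarrow> g i (a i) = 0"
    and w: "convex_weights I w" and stationary: "wmean I w (\<lambda>i. g i x) = 0"
  shows "2 * mu * (norm (x - wmean I w a))\<^sup>2 \<le> (L - mu) * wvar I w a"
proof -
  define m where "m = wmean I w a"
  have each: "g i x \<bullet> (m - x) + mu / 2 * (norm (m - x))\<^sup>2 + mu / 2 * (norm (x - a i))\<^sup>2
      \<le> L / 2 * (norm (m - a i))\<^sup>2" if i: "i \<in> I" for i
  proof -
    have "f i x + g i x \<bullet> (m - x) + mu / 2 * (norm (m - x))\<^sup>2 \<le> f i m"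
      using sc[OF i] unfolding strongly_convex_grad_def by blast
    moreover have "f i (a i) + mu / 2 * (norm (x - a i))\<^sup>2 \<le> f i x"
      using sc[OF i] crit[OF i] unfolding strongly_convex_grad_def by (metis add_0_right inner_zero_left)
    moreover have "f i m \<le> f i (a i) + L / 2 * (norm (m - a i))\<^sup>2"
      using smooth[OF i] crit[OF i] unfolding smooth_grad_def by (metis add_0_right inner_zero_left)
    ultimately show ?thesis by linarith
  qed
  have "(\<Sum>i\<in>I. w i * (g i x \<bullet> (m - x)) + w i * (mu / 2 * (norm (m - x))\<^sup>2)
        + mu / 2 * (w i * (norm (x - a i))\<^sup>2))
      \<le> (\<Sum>i\<in>I. L / 2 * (w i * (norm (m - a i))\<^sup>2))"
  proof (rule sum_mono)
    fix i assume i: "i \<in> I"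
    then have "0 \<le> w i" using w unfolding convex_weights_def by blast
    from mult_left_mono[OF each[OF i] this]
    show "w i * (g i x \<bullet> (m - x)) + w i * (mu / 2 * (norm (m - x))\<^sup>2)
        + mu / 2 * (w i * (norm (x - a i))\<^sup>2) \<le> L / 2 * (w i * (norm (m - a i))\<^sup>2)"
      by (simp add: algebra_simps)
  qed
  moreover have "(\<Sum>i\<in>I. w i * (g i x \<bullet> (m - x))) = wmean I w (\<lambda>i. g i x) \<bullet> (m - x)"
    by (simp add: wmean_def inner_sum_left)
  ultimately have "mu / 2 * (norm (m - x))\<^sup>2 + mu / 2 * (\<Sum>i\<in>I. w i * (norm (x - a i))\<^sup>2)
      \<le> L / 2 * wvar I w a"
    using w stationary unfolding convex_weights_def wvar_def m_def
    by (simp only: sum.distrib sum_distrib_left[symmetric] sum_distrib_right[symmetric]) simp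
  then show ?thesis
    using w unfolding convex_weights_def
    by (simp add: sum_sq_dist_eq_wvar m_def norm_minus_commute algebra_simps)
qed

text \<open>Cauchy-Schwarz with weights \<open>1, (L - mu)/(2 mu), (L - mu)/(2 mu)\<close>, which sum to \<open>L / mu\<close>.\<close>

lemma sq_sum_le_of_weighted_bounds:
  fixes mu L A X Y P Q :: real
  assumes mu: "0 < mu" "mu \<le> L" and PQ: "0 \<le> P" "0 \<le> Q"
    and X: "2 * mu * X\<^sup>2 \<le> (L - mu) * P" and Y: "2 * mu * Y\<^sup>2 \<le> (L - mu) * Q"
  shows "mu * (A + X + Y)\<^sup>2 \<le> L * (A\<^sup>2 + P + Q)"
proof (cases "L = mu")
  case True
  then have "X = 0" "Y = 0"
    using X Y mu by (simp_all add: mult_le_0_iff)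
  then show ?thesis using True PQ mu by simp
next
  case False
  define t where "t = L - mu"
  have t: "0 < t" using False mu by (simp add: t_def)
  have "(mu + t) * (2 * mu * X\<^sup>2) \<le> (mu + t) * (t * P)"
    using X mu t by (intro mult_left_mono) (simp_all add: t_def)
  moreover have "(mu + t) * (2 * mu * Y\<^sup>2) \<le> (mu + t) * (t * Q)"
    using Y mu t by (intro mult_left_mono) (simp_all add: t_def)
  moreover have "t * (mu + t) * A\<^sup>2 + (mu + t) * (2 * mu * X\<^sup>2) + (mu + t) * (2 * mu * Y\<^sup>2)
      - t * (mu * (A + X + Y)\<^sup>2) = (t * A - mu * X - mu * Y)\<^sup>2 + mu * (mu + t) * (X - Y)\<^sup>2"
    by (simp add: power2_eq_square algebra_simps)
  moreover have "0 \<le> (t * A - mu * X - mu * Y)\<^sup>2 + mu * (mu + t) * (X - Y)\<^sup>2"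
    using mu t by simp
  ultimately have "t * (mu * (A + X + Y)\<^sup>2) \<le> t * ((mu + t) * (A\<^sup>2 + P + Q))"
    by (simp add: algebra_simps)
  then show ?thesis using t by (simp add: t_def)
qed

lemma dist_le_of_wmean_bounds:
  fixes a :: "'i \<Rightarrow> 'a::real_inner"
  assumes mu: "0 < mu" "mu \<le> L" and w: "convex_weights I w" and v: "convex_weights I v"
    and r: "\<And>i j. i \<in> I \<Longrightarrow> j \<in> I \<Longrightarrow> norm (a i - a j) \<le> r"
    and x: "2 * mu * (norm (x - wmean I w a))\<^sup>2 \<le> (L - mu) * wvar I w a"
    and y: "2 * mu * (norm (y - wmean I v a))\<^sup>2 \<le> (L - mu) * wvar I v a"
  shows "norm (x - y) \<le> sqrt (L / mu) * r"
proof -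
  define A where "A = norm (wmean I w a - wmean I v a)"
  define X where "X = norm (x - wmean I w a)"
  define Y where "Y = norm (y - wmean I v a)"
  have "I \<noteq> {}"
    using w unfolding convex_weights_def by auto
  then obtain i where "i \<in> I" by blast
  then have "0 \<le> r" using r[of i i] by simp
  have "(norm (a j - a i))\<^sup>2 \<le> r\<^sup>2" if "i \<in> I" "j \<in> I" for i j
    using r[OF that(2,1)] by (simp add: power_mono)
  then have spread: "A\<^sup>2 + wvar I w a + wvar I v a \<le> r\<^sup>2"
    using w v unfolding A_def convex_weights_def
    by (simp add: wmean_cross_sq_dist[symmetric] convex_weights_sum_le[OF v] convex_weights_sum_le[OF w])
  have "mu * (A + X + Y)\<^sup>2 \<le> L * (A\<^sup>2 + wvar I w a + wvar I v a)"
    using mu wvar_nonneg[OF w] wvar_nonneg[OF v] x y unfolding X_def Y_def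
    by (rule sq_sum_le_of_weighted_bounds)
  also have "\<dots> \<le> L * r\<^sup>2"
    using spread mu by (intro mult_left_mono) simp_all
  finally have "(A + X + Y)\<^sup>2 \<le> L / mu * r\<^sup>2"
    using mu by (simp add: field_simps)
  then have "A + X + Y \<le> sqrt (L / mu * r\<^sup>2)"
    by (rule real_le_rsqrt)
  also have "\<dots> = sqrt (L / mu) * sqrt (r\<^sup>2)"
    by (rule real_sqrt_mult)
  also have "sqrt (r\<^sup>2) = r"
    using \<open>0 \<le> r\<close> by simp
  moreover have "norm (x - y) \<le> X + A + Y"
  proof -
    have "norm (x - y) \<le> norm ((x - wmean I w a) + (wmean I w a - wmean I v a)) + Y"
      using norm_triangle_ineq4[of "(x - wmean I w a) + (wmean I w a - wmean I v a)" "y - wmean I v a"]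
      by (simp add: Y_def)
    also have "norm ((x - wmean I w a) + (wmean I w a - wmean I v a)) \<le> X + A"
      unfolding X_def A_def by (rule norm_triangle_ineq)
    finally show ?thesis by simp
  qed
  ultimately show ?thesis by simp
qed

lemma norm_argmin_pt_diff_le_minimizer_spread:
  assumes "i < n" and "j < n"
  shows "norm (argmin_pt (f i) - argmin_pt (f j)) \<le> minimizer_spread n f"
proof -
  have "{norm (argmin_pt (f i) - argmin_pt (f j)) | i j. i < n \<and> j < n}
      = (\<lambda>(i, j). norm (argmin_pt (f i) - argmin_pt (f j))) ` ({..<n} \<times> {..<n})"
    by auto
  then show ?thesis
    unfolding minimizer_spread_def using assms by (auto intro!: Max_ge)
qed

lemma hess_bounded_family_imp_quadratic_bounds:
  fixes f :: "'i \<Rightarrow> 'a::euclidean_space \<Rightarrow> real"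
  assumes "\<And>i. i \<in> I \<Longrightarrow> hess_bounded mu L (f i)"
  obtains g where "\<And>i x. i \<in> I \<Longrightarrow> (f i has_derivative (\<lambda>h. g i x \<bullet> h)) (at x)"
    and "\<And>i. i \<in> I \<Longrightarrow> strongly_convex_grad mu (g i) (f i)"
    and "\<And>i. i \<in> I \<Longrightarrow> smooth_grad L (g i) (f i)"
proof -
  have "\<forall>i\<in>I. \<exists>g. (\<forall>x. (f i has_derivative (\<lambda>h. g x \<bullet> h)) (at x))
      \<and> strongly_convex_grad mu g (f i) \<and> smooth_grad L g (f i)"
  proof
    fix i assume "i \<in> I"
    then obtain g where "\<And>x. (f i has_derivative (\<lambda>h. g x \<bullet> h)) (at x)"
      and "strongly_convex_grad mu g (f i)" and "smooth_grad L g (f i)"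
      using hess_bounded_imp_quadratic_bounds assms by blast
    then show "\<exists>g. (\<forall>x. (f i has_derivative (\<lambda>h. g x \<bullet> h)) (at x))
        \<and> strongly_convex_grad mu g (f i) \<and> smooth_grad L g (f i)" by blast
  qed
  from bchoice[OF this] obtain g where "\<forall>i\<in>I. (\<forall>x. (f i has_derivative (\<lambda>h. g i x \<bullet> h)) (at x))
      \<and> strongly_convex_grad mu (g i) (f i) \<and> smooth_grad L (g i) (f i)"
    by blast
  then show ?thesis by (intro that) auto
qed

lemma pareto_near_wmean_of_argmins:
  fixes f :: "nat \<Rightarrow> 'a::euclidean_space \<Rightarrow> real"
  assumes hess: "\<And>i. i < n \<Longrightarrow> hess_bounded mu L (f i)"
    and mu: "0 < mu" "mu \<le> L" and n: "n \<ge> 1" and x: "x \<in> pareto n f"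
  obtains w where "convex_weights {..<n} w"
    and "2 * mu * (norm (x - wmean {..<n} w (\<lambda>i. argmin_pt (f i))))\<^sup>2
      \<le> (L - mu) * wvar {..<n} w (\<lambda>i. argmin_pt (f i))"
proof -
  obtain g where f': "\<And>i x. i < n \<Longrightarrow> (f i has_derivative (\<lambda>h. g i x \<bullet> h)) (at x)"
    and sc: "\<And>i. i < n \<Longrightarrow> strongly_convex_grad mu (g i) (f i)"
    and smooth: "\<And>i. i < n \<Longrightarrow> smooth_grad L (g i) (f i)"
    using hess_bounded_family_imp_quadratic_bounds[of "{..<n}" mu L f] hess by auto
  obtain w where w: "convex_weights {..<n} w" and stationary: "wmean {..<n} w (\<lambda>i. g i x) = 0"
    using pareto_imp_stationary[OF smooth _ n x] mu by auto
  have crit: "g i (argmin_pt (f i)) = 0" if "i \<in> {..<n}" for i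
    using grad_argmin_pt_eq_0[OF f' sc] that mu by simp
  have "2 * mu * (norm (x - wmean {..<n} w (\<lambda>i. argmin_pt (f i))))\<^sup>2
      \<le> (L - mu) * wvar {..<n} w (\<lambda>i. argmin_pt (f i))"
    by (rule stationary_point_near_wmean_of_minimizers[OF _ _ crit w stationary]) (use sc smooth in auto)
  with w show ?thesis by (rule that)
qed

theorem lemma1:
  fixes f :: "nat \<Rightarrow> 'a::euclidean_space \<Rightarrow> real" and n :: nat and mu L :: real
  assumes "n \<ge> 1" and "0 < mu" and "mu \<le> L"
    and "\<And>i. i < n \<Longrightarrow> hess_bounded mu L (f i)"
  shows "\<forall>x\<in>pareto n f. \<forall>x'\<in>pareto n f.
           norm (x - x') \<le> sqrt (L / mu) * minimizer_spread n f"
proof (intro ballI)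
  fix x x' assume x: "x \<in> pareto n f" and x': "x' \<in> pareto n f"
  obtain w where w: "convex_weights {..<n} w"
    and x_near: "2 * mu * (norm (x - wmean {..<n} w (\<lambda>i. argmin_pt (f i))))\<^sup>2
      \<le> (L - mu) * wvar {..<n} w (\<lambda>i. argmin_pt (f i))"
    using pareto_near_wmean_of_argmins[OF assms(4) assms(2,3,1) x] by blast
  obtain w' where w': "convex_weights {..<n} w'"
    and x'_near: "2 * mu * (norm (x' - wmean {..<n} w' (\<lambda>i. argmin_pt (f i))))\<^sup>2
      \<le> (L - mu) * wvar {..<n} w' (\<lambda>i. argmin_pt (f i))"
    using pareto_near_wmean_of_argmins[OF assms(4) assms(2,3,1) x'] by blast
  have "norm (argmin_pt (f i) - argmin_pt (f j)) \<le> minimizer_spread n f"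
    if "i \<in> {..<n}" "j \<in> {..<n}" for i j
    using that by (simp add: norm_argmin_pt_diff_le_minimizer_spread)
  then show "norm (x - x') \<le> sqrt (L / mu) * minimizer_spread n f"
    by (rule dist_le_of_wmean_bounds[OF assms(2,3) w w' _ x_near x'_near])
qed

end
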